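(* Let $q=rQ$ with $\gcd(r,Q)=1$, and suppose that $a_q,a_r,a_Q:\mathbb Z\to\mathbb C$ are functions of periods $q,r,Q$ respectively, bounded by $1$ in absolute value, with $a_q(n)=a_r(n)a_Q(n)$. Let $I$ be an interval of length $N$, and for a function $\phi$ set $\mathbb E(\phi):=\frac1N\sum_{n\in I}\phi(n)$. Let $M=\lfloor(N/r)^{2/3}\rfloor$ and suppose $M\ge5$. Then $$|\mathbb E(a_q)|^2\le\frac5M+\frac2{M^2}\sum_{1\le i\ne j\le M}|\mathbb E(A_{(ir,jr)})|,$$ where $A_{(ir,jr)}(n):=a_Q(n+ir)\overline{a_Q(n+jr)}$.
   Context: The sums over $I$ are over integers $n\in I$. *)

theory Defs
  imports Complex_Main
begin

definition avg :: "real set \<Rightarrow> real \<Rightarrow> (int \<Rightarrow> complex) \<Rightarrow> complex" where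
  "avg I N \<phi> = (1 / of_real N) * (\<Sum>n\<in>{n::int. real_of_int n \<in> I}. \<phi> n)"

definition interval_of_length :: "real set \<Rightarrow> real \<Rightarrow> bool" where
  "interval_of_length I N \<longleftrightarrow> (\<exists>a b. b - a = N \<and>
     (I = {a..b} \<or> I = {a<..b} \<or> I = {a..<b} \<or> I = {a<..<b}))"

end

theory Submission
  imports Defs "HOL-Analysis.Analysis"
begin

text \<open>
  Let S be the sum of a_q over the K \<le> N + 1 integers A, ..., B of I; the choice of M gives
  r^2 M^3 \<le> N^2.  As a_r has period r, a_q(n + ir) = a_r(n) a_Q(n + ir), so up to boundary
  terms M S is the sum over n of a_r(n) F(n) with F(n) = a_Q(n + r) + ... + a_Q(n + M r).
  Cauchy-Schwarz against |a_r| \<le> 1 and expanding |F|^2 leave the diagonal M K plus the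
  correlations of a_Q.  For M \<ge> 7 the shifted windows are moved back onto [A, B], losing
  r M (M + 1) in M |S|.  For M = 5, 6 this loss is too big; instead the shifted copies of a_Q
  are truncated to [A, B] and summed over the longer window [A - M r, B - r], which makes the
  identity for M S exact and moves the loss into the correlations, where it costs only
  (i + j) r for the pair (i, j).
\<close>

lemma norm_sum_mult_power2_le:
  fixes x y :: "'a \<Rightarrow> 'b::real_normed_div_algebra"
  shows "(norm (\<Sum>n\<in>X. x n * y n))^2 \<le> (\<Sum>n\<in>X. (norm (x n))^2) * (\<Sum>n\<in>X. (norm (y n))^2)"
proof -
  have "norm (\<Sum>n\<in>X. x n * y n) \<le> (\<Sum>n\<in>X. norm (x n) * norm (y n))"
    by (simp add: norm_sum norm_mult flip: norm_mult)
  then have "(norm (\<Sum>n\<in>X. x n * y n))^2 \<le> (\<Sum>n\<in>X. norm (x n) * norm (y n))^2"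
    by (simp add: power_mono)
  also have "\<dots> \<le> (\<Sum>n\<in>X. (norm (x n))^2) * (\<Sum>n\<in>X. (norm (y n))^2)"
    by (rule Cauchy_Schwarz_ineq_sum)
  finally show ?thesis .
qed

lemma norm_sum_diff_le_card_diff:
  fixes f :: "'a \<Rightarrow> 'b::real_normed_vector"
  assumes "finite X" "finite Y" "\<And>n. n \<in> X \<union> Y \<Longrightarrow> norm (f n) \<le> 1"
  shows "norm (sum f X - sum f Y) \<le> real (card (X - Y)) + real (card (Y - X))"
proof -
  have "sum f X = sum f (X \<inter> Y) + sum f (X - Y)" "sum f Y = sum f (Y \<inter> X) + sum f (Y - X)"
    using assms(1,2) by (simp_all add: sum.Int_Diff)
  then have "sum f X - sum f Y = sum f (X - Y) - sum f (Y - X)"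
    by (simp add: Int_commute)
  also have "norm \<dots> \<le> norm (sum f (X - Y)) + norm (sum f (Y - X))"
    by (rule norm_triangle_ineq4)
  also have "norm (sum f (X - Y)) \<le> (\<Sum>n\<in>X - Y. 1)" by (rule sum_norm_le) (use assms in auto)
  also have "norm (sum f (Y - X)) \<le> (\<Sum>n\<in>Y - X. 1)" by (rule sum_norm_le) (use assms in auto)
  finally show ?thesis by simp
qed

lemma sum_norm_sum_power2_le:
  fixes z :: "'i \<Rightarrow> 'a \<Rightarrow> complex"
  assumes "finite J"
  shows "(\<Sum>n\<in>X. (norm (\<Sum>i\<in>J. z i n))^2) \<le> (\<Sum>i\<in>J. \<Sum>n\<in>X. (norm (z i n))^2)
     + (\<Sum>i\<in>J. \<Sum>j\<in>J - {i}. norm (\<Sum>n\<in>X. z i n * cnj (z j n)))"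
proof -
  have square: "(norm (\<Sum>i\<in>J. z i n))^2 = Re (\<Sum>i\<in>J. \<Sum>j\<in>J. z i n * cnj (z j n))" for n
  proof -
    have "complex_of_real ((norm (\<Sum>i\<in>J. z i n))^2) = (\<Sum>i\<in>J. \<Sum>j\<in>J. z i n * cnj (z j n))"
      by (simp only: complex_norm_square cnj_sum sum_product)
    then show ?thesis by (metis Re_complex_of_real)
  qed
  have "(\<Sum>n\<in>X. (norm (\<Sum>i\<in>J. z i n))^2) = Re (\<Sum>i\<in>J. \<Sum>j\<in>J. \<Sum>n\<in>X. z i n * cnj (z j n))"
    by (simp add: square Re_sum sum.swap[of _ X])
  also have "(\<Sum>i\<in>J. \<Sum>j\<in>J. \<Sum>n\<in>X. z i n * cnj (z j n))
      = (\<Sum>i\<in>J. (\<Sum>n\<in>X. z i n * cnj (z i n)) + (\<Sum>j\<in>J - {i}. \<Sum>n\<in>X. z i n * cnj (z j n)))"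
    by (rule sum.cong) (auto simp: assms sum.remove)
  also have "Re \<dots> = (\<Sum>i\<in>J. \<Sum>n\<in>X. (norm (z i n))^2)
      + (\<Sum>i\<in>J. Re (\<Sum>j\<in>J - {i}. \<Sum>n\<in>X. z i n * cnj (z j n)))"
    by (simp only: Re_sum sum.distrib plus_complex.sel complex_norm_square[symmetric] Re_complex_of_real)
  also have "\<dots> \<le> (\<Sum>i\<in>J. \<Sum>n\<in>X. (norm (z i n))^2)
      + (\<Sum>i\<in>J. \<Sum>j\<in>J - {i}. norm (\<Sum>n\<in>X. z i n * cnj (z j n)))"
    by (intro add_left_mono sum_mono order_trans[OF complex_Re_le_cmod norm_sum])
  finally show ?thesis .
qed

lemma norm_sum_mult_sum_power2_le:
  fixes w :: "'a \<Rightarrow> complex" and z :: "'i \<Rightarrow> 'a \<Rightarrow> complex"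
  assumes "finite X" "finite J" "\<And>n. n \<in> X \<Longrightarrow> norm (w n) \<le> 1"
  shows "(norm (\<Sum>n\<in>X. w n * (\<Sum>i\<in>J. z i n)))^2 \<le> real (card X) *
    ((\<Sum>i\<in>J. \<Sum>n\<in>X. (norm (z i n))^2) + (\<Sum>i\<in>J. \<Sum>j\<in>J - {i}. norm (\<Sum>n\<in>X. z i n * cnj (z j n))))"
proof -
  have "(\<Sum>n\<in>X. (norm (w n))^2) \<le> (\<Sum>n\<in>X. 1)"
    by (intro sum_mono) (simp add: assms(3) power_le_one)
  then have "(\<Sum>n\<in>X. (norm (w n))^2) \<le> real (card X)" by simp
  moreover note sum_norm_sum_power2_le[OF assms(2), where X = X and z = z]
  ultimately show ?thesis
    by (intro order_trans[OF norm_sum_mult_power2_le] mult_mono) (auto intro: sum_nonneg)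
qed

lemma sum_shift_atLeastAtMost_int:
  fixes f :: "int \<Rightarrow> 'b::comm_monoid_add"
  shows "(\<Sum>n\<in>{A..B}. f (n + k)) = (\<Sum>n\<in>{A + k..B + k}. f n)"
proof -
  have "(\<Sum>n\<in>(\<lambda>n. n + k) ` {A..B}. f n) = (\<Sum>n\<in>{A..B}. f (n + k))"
    by (subst sum.reindex) (auto simp: inj_on_def)
  then show ?thesis by simp
qed

lemma norm_sum_shift_diff_le:
  fixes f :: "int \<Rightarrow> 'b::real_normed_vector"
  assumes "\<And>n. norm (f n) \<le> 1" "k \<ge> 0"
  shows "norm ((\<Sum>n\<in>{A..B}. f n) - (\<Sum>n\<in>{A..B}. f (n + k))) \<le> 2 * of_int k"
proof -
  have "card ({A..B} - {A + k..B + k}) \<le> card {A..<A + k}"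
    by (rule card_mono) (use assms in auto)
  moreover have "card ({A + k..B + k} - {A..B}) \<le> card {B<..B + k}"
    by (rule card_mono) (use assms in auto)
  moreover note norm_sum_diff_le_card_diff[of "{A..B}" "{A + k..B + k}" f]
  ultimately show ?thesis
    using assms by (simp add: sum_shift_atLeastAtMost_int)
qed

lemma norm_of_nat_mult_sum_sub_sum_shifts_le:
  fixes f :: "int \<Rightarrow> 'b::real_normed_algebra_1"
  assumes "\<And>n. norm (f n) \<le> 1"
  shows "norm (of_nat M * (\<Sum>n\<in>{A..B}. f n) - (\<Sum>i\<in>{1..M}. \<Sum>n\<in>{A..B}. f (n + int (i * r))))
    \<le> real r * real M * (real M + 1)"
proof -
  have "of_nat M * (\<Sum>n\<in>{A..B}. f n) - (\<Sum>i\<in>{1..M}. \<Sum>n\<in>{A..B}. f (n + int (i * r)))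
      = (\<Sum>i\<in>{1..M}. (\<Sum>n\<in>{A..B}. f n) - (\<Sum>n\<in>{A..B}. f (n + int (i * r))))"
    by (simp add: sum_subtractf)
  also have "norm \<dots> \<le> (\<Sum>i\<in>{1..M}. 2 * real (i * r))"
    by (intro order_trans[OF norm_sum] sum_mono order_trans[OF norm_sum_shift_diff_le[OF assms]]) auto
  also have "\<dots> = real r * (2 * (\<Sum>i = Suc 0..M. real i))"
    by (simp add: sum_distrib_left algebra_simps)
  also have "\<dots> = real r * real M * (real M + 1)"
    by (simp only: double_gauss_sum_from_Suc_0 mult.assoc)
  finally show ?thesis .
qed

lemma sum_off_diagonal_add:
  fixes f :: "'a \<Rightarrow> 'b::comm_ring_1"
  assumes "finite I"
  shows "(\<Sum>i\<in>I. \<Sum>j\<in>I - {i}. f i + f j) = 2 * (of_nat (card I) - 1) * sum f I"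
proof -
  have "(\<Sum>j\<in>I - {i}. f i + f j) = (of_nat (card I) - 1) * f i + (sum f I - f i)" if "i \<in> I" for i
    using assms that card_gt_0_iff[of I] by (auto simp: sum.distrib sum_diff1 of_nat_diff algebra_simps)
  then have "(\<Sum>i\<in>I. \<Sum>j\<in>I - {i}. f i + f j) = (\<Sum>i\<in>I. (of_nat (card I) - 1) * f i + (sum f I - f i))"
    by (rule sum.cong[OF refl])
  also have "\<dots> = (of_nat (card I) - 1) * sum f I + (of_nat (card I) * sum f I - sum f I)"
    by (simp add: sum.distrib sum_subtractf sum_distrib_left)
  also have "\<dots> = 2 * (of_nat (card I) - 1) * sum f I"
    by (simp add: algebra_simps)
  finally show ?thesis .
qed

lemma periodic_add_mult:
  assumes "\<And>n. f (n + int p) = f n"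
  shows "f (n + int (i * p)) = f n"
proof (induction i)
  case (Suc i)
  have "f (n + int (Suc i * p)) = f ((n + int (i * p)) + int p)" by (simp add: algebra_simps)
  with Suc assms show ?case by simp
qed simp

lemma norm_sum_double_window_diff_le:
  fixes f :: "int \<Rightarrow> 'b::real_normed_vector"
  assumes "0 \<le> a" "0 \<le> b" "\<And>n. norm (f n) \<le> 1"
  shows "norm ((\<Sum>n | n + a \<in> {A..B} \<and> n + b \<in> {A..B}. f n) - (\<Sum>n\<in>{A..B}. f n)) \<le> of_int (a + b)"
proof -
  define W where "W = {A - min a b..B - max a b}"
  have "{n. n + a \<in> {A..B} \<and> n + b \<in> {A..B}} = W" by (auto simp: W_def)
  then have "norm ((\<Sum>n | n + a \<in> {A..B} \<and> n + b \<in> {A..B}. f n) - (\<Sum>n\<in>{A..B}. f n))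
      \<le> real (card (W - {A..B})) + real (card ({A..B} - W))"
    by (simp only:) (rule norm_sum_diff_le_card_diff, auto simp: W_def assms(3))
  also have "\<dots> \<le> real (card {A - min a b..<A}) + real (card {B - max a b<..B})"
    by (intro add_mono of_nat_mono card_mono) (use assms in \<open>auto simp: W_def\<close>)
  also have "\<dots> = of_int (a + b)"
    using assms(1,2) by (simp add: min_def max_def)
  finally show ?thesis .
qed

definition truncated_shift :: "(int \<Rightarrow> 'a::zero) \<Rightarrow> int set \<Rightarrow> int \<Rightarrow> int \<Rightarrow> 'a" where
  "truncated_shift f Z k n = (if n + k \<in> Z then f (n + k) else 0)"

lemma sum_truncated_shift:
  fixes f :: "int \<Rightarrow> 'b::comm_monoid_add"
  assumes "finite J" "{A - k..B - k} \<subseteq> J"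
  shows "(\<Sum>n\<in>J. truncated_shift f {A..B} k n) = (\<Sum>n\<in>{A..B}. f n)"
proof -
  have "(\<Sum>n\<in>J. truncated_shift f {A..B} k n) = (\<Sum>n\<in>{n \<in> J. n + k \<in> {A..B}}. f (n + k))"
    using assms(1) by (simp add: truncated_shift_def sum.inter_filter)
  also have "{n \<in> J. n + k \<in> {A..B}} = {A - k..B - k}" using assms(2) by auto
  finally show ?thesis by (simp add: sum_shift_atLeastAtMost_int)
qed

lemma norm_sum_truncated_shift_product_le:
  fixes f :: "int \<Rightarrow> complex" and a b :: int
  assumes "finite J" "{A - a..B - a} \<subseteq> J" "0 \<le> a" "0 \<le> b" "\<And>n. norm (f n) \<le> 1"
  shows "norm (\<Sum>n\<in>J. truncated_shift f {A..B} a n * cnj (truncated_shift f {A..B} b n))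
    \<le> norm (\<Sum>n\<in>{A..B}. f (n + a) * cnj (f (n + b))) + of_int (a + b)"
proof -
  define P where "P n = f (n + a) * cnj (f (n + b))" for n
  have "(\<Sum>n\<in>J. truncated_shift f {A..B} a n * cnj (truncated_shift f {A..B} b n))
      = (\<Sum>n\<in>J. if n + a \<in> {A..B} \<and> n + b \<in> {A..B} then P n else 0)"
    by (rule sum.cong) (auto simp: truncated_shift_def P_def)
  also have "\<dots> = (\<Sum>n\<in>{n \<in> J. n + a \<in> {A..B} \<and> n + b \<in> {A..B}}. P n)"
    by (rule sum.inter_filter[OF assms(1), symmetric])
  also have "{n \<in> J. n + a \<in> {A..B} \<and> n + b \<in> {A..B}} = {n. n + a \<in> {A..B} \<and> n + b \<in> {A..B}}"
    using assms(2) by auto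
  finally have truncated: "(\<Sum>n\<in>J. truncated_shift f {A..B} a n * cnj (truncated_shift f {A..B} b n))
      = (\<Sum>n | n + a \<in> {A..B} \<and> n + b \<in> {A..B}. P n)" .
  have "norm (P n) \<le> 1" for n
    using assms(5) by (simp add: P_def norm_mult mult_le_one)
  then have "norm ((\<Sum>n | n + a \<in> {A..B} \<and> n + b \<in> {A..B}. P n) - (\<Sum>n\<in>{A..B}. P n)) \<le> of_int (a + b)"
    by (rule norm_sum_double_window_diff_le[OF assms(3,4)])
  then show ?thesis
    unfolding truncated P_def[symmetric]
    using norm_triangle_sub[of "\<Sum>n | n + a \<in> {A..B} \<and> n + b \<in> {A..B}. P n" "\<Sum>n\<in>{A..B}. P n"]
    by linarith
qed

text \<open>N times the paper's sum of |E(A_(ir,jr))| over 1 \<le> i \<noteq> j \<le> M, for Z the integers of I.\<close>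
definition correlation_sum :: "(int \<Rightarrow> complex) \<Rightarrow> nat \<Rightarrow> nat \<Rightarrow> int set \<Rightarrow> real" where
  "correlation_sum a r M Z = (\<Sum>i\<in>{1..M}. \<Sum>j\<in>{1..M} - {i}.
     norm (\<Sum>n\<in>Z. a (n + int (i * r)) * cnj (a (n + int (j * r)))))"

lemma correlation_sum_nonneg: "correlation_sum a r M Z \<ge> 0"
  by (simp add: correlation_sum_def sum_nonneg)

lemma shifted_window_estimate:
  fixes ar aQ :: "int \<Rightarrow> complex" and r M :: nat and A B :: int
  assumes per: "\<And>n. ar (n + int r) = ar n"
    and nr: "\<And>n. norm (ar n) \<le> 1" and nQ: "\<And>n. norm (aQ n) \<le> 1"
  defines "K \<equiv> real (card {A..B})"
  shows "real M * norm (\<Sum>n\<in>{A..B}. ar n * aQ n)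
    \<le> sqrt (K * (real M * K + correlation_sum aQ r M {A..B})) + real r * real M * (real M + 1)"
proof -
  define S where "S = (\<Sum>n\<in>{A..B}. ar n * aQ n)"
  define T where "T = (\<Sum>n\<in>{A..B}. ar n * (\<Sum>i\<in>{1..M}. aQ (n + int (i * r))))"
  have "ar (n + int (i * r)) = ar n" for n i
    by (rule periodic_add_mult[where f = ar, OF per])
  then have "T = (\<Sum>i\<in>{1..M}. \<Sum>n\<in>{A..B}. ar (n + int (i * r)) * aQ (n + int (i * r)))"
    by (simp only: T_def sum_distrib_left sum.swap[of _ "{A..B}"])
  then have boundary: "norm (of_nat M * S - T) \<le> real r * real M * (real M + 1)"
    unfolding S_def using nr nQ
    by (simp only:) (rule norm_of_nat_mult_sum_sub_sum_shifts_le, simp add: norm_mult mult_le_one)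
  have "(\<Sum>i\<in>{1..M}. \<Sum>n\<in>{A..B}. (norm (aQ (n + int (i * r))))^2) \<le> (\<Sum>i\<in>{1..M}. \<Sum>n\<in>{A..B}. 1)"
    by (intro sum_mono) (simp add: nQ power_le_one)
  then have diagonal: "(\<Sum>i\<in>{1..M}. \<Sum>n\<in>{A..B}. (norm (aQ (n + int (i * r))))^2) \<le> real M * K"
    by (simp add: K_def)
  have "(norm T)^2 \<le> K * (real M * K + correlation_sum aQ r M {A..B})"
    unfolding T_def K_def correlation_sum_def
    by (rule order_trans[OF norm_sum_mult_sum_power2_le])
      (use nr diagonal in \<open>auto simp: K_def intro!: mult_left_mono add_right_mono\<close>)
  then have "norm T \<le> sqrt (K * (real M * K + correlation_sum aQ r M {A..B}))"
    by (rule real_le_rsqrt)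
  moreover have "real M * norm S \<le> norm T + norm (of_nat M * S - T)"
    by (metis norm_mult norm_of_nat norm_triangle_sub)
  ultimately show ?thesis
    using boundary by (simp add: S_def)
qed

lemma shifted_interval_subset_extended_window:
  fixes i r M :: nat
  assumes "i \<in> {1..M}"
  shows "{A - int (i * r)..B - int (i * r)} \<subseteq> {A - int (M * r)..B - int r}"
proof -
  have "int r \<le> int (i * r)" "int (i * r) \<le> int (M * r)"
    using assms by (simp_all only: of_nat_le_iff) simp_all
  then show ?thesis by auto
qed

lemma card_extended_window_le:
  fixes r M :: nat and A B :: int
  assumes "M \<ge> 1"
  shows "real (card {A - int (M * r)..B - int r}) \<le> real (card {A..B}) + (real M - 1) * real r"
proof -
  define k where "k = M * r"
  have "r \<le> k" using assms by (simp add: k_def)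
  then have "card {A - int k..B - int r} \<le> card {A..B} + (k - r)" by simp
  then have "real (card {A - int k..B - int r}) \<le> real (card {A..B}) + (real k - real r)"
    using \<open>r \<le> k\<close> by (simp add: of_nat_diff flip: of_nat_add)
  then show ?thesis by (simp add: k_def algebra_simps)
qed

lemma extended_window_identity:
  fixes ar aQ :: "int \<Rightarrow> complex" and r M :: nat and A B :: int
  assumes per: "\<And>n. ar (n + int r) = ar n"
  shows "of_nat M * (\<Sum>n\<in>{A..B}. ar n * aQ n)
    = (\<Sum>n\<in>{A - int (M * r)..B - int r}. ar n * (\<Sum>i\<in>{1..M}. truncated_shift aQ {A..B} (int (i * r)) n))"
proof -
  have per_i: "ar (n + int i * int r) = ar n" for n i
    using periodic_add_mult[where f = ar, OF per] by simp
  have "(\<Sum>n\<in>{A - int (M * r)..B - int r}. truncated_shift (\<lambda>n. ar n * aQ n) {A..B} (int (i * r)) n)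
      = (\<Sum>n\<in>{A..B}. ar n * aQ n)" if "i \<in> {1..M}" for i
    by (rule sum_truncated_shift[OF _ shifted_interval_subset_extended_window[OF that]]) simp
  then have "of_nat M * (\<Sum>n\<in>{A..B}. ar n * aQ n)
      = (\<Sum>i\<in>{1..M}. \<Sum>n\<in>{A - int (M * r)..B - int r}. truncated_shift (\<lambda>n. ar n * aQ n) {A..B} (int (i * r)) n)"
    by simp
  also have "\<dots> = (\<Sum>i\<in>{1..M}. \<Sum>n\<in>{A - int (M * r)..B - int r}. ar n * truncated_shift aQ {A..B} (int (i * r)) n)"
    by (intro sum.cong refl) (simp add: truncated_shift_def per_i)
  also have "\<dots> = (\<Sum>n\<in>{A - int (M * r)..B - int r}. ar n * (\<Sum>i\<in>{1..M}. truncated_shift aQ {A..B} (int (i * r)) n))"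
    by (subst sum.swap) (simp add: sum_distrib_left)
  finally show ?thesis .
qed

lemma extended_window_correlations_le:
  fixes aQ :: "int \<Rightarrow> complex" and r M :: nat and A B :: int
  assumes nQ: "\<And>n. norm (aQ n) \<le> 1"
  defines "J \<equiv> {A - int (M * r)..B - int r}" and "g \<equiv> \<lambda>i. truncated_shift aQ {A..B} (int (i * r))"
  shows "(\<Sum>i\<in>{1..M}. \<Sum>n\<in>J. (norm (g i n))^2)
      + (\<Sum>i\<in>{1..M}. \<Sum>j\<in>{1..M} - {i}. norm (\<Sum>n\<in>J. g i n * cnj (g j n)))
    \<le> real M * real (card {A..B}) + correlation_sum aQ r M {A..B} + real r * (real M - 1) * real M * (real M + 1)"
proof -
  have diagonal: "(\<Sum>n\<in>J. (norm (g i n))^2) \<le> real (card {A..B})" if "i \<in> {1..M}" for i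
  proof -
    have "(\<Sum>n\<in>J. (norm (g i n))^2) \<le> (\<Sum>n\<in>J. truncated_shift (\<lambda>_. 1) {A..B} (int (i * r)) n)"
      by (intro sum_mono) (simp add: g_def truncated_shift_def nQ power_le_one)
    also have "\<dots> = (\<Sum>n\<in>{A..B}. 1)"
      unfolding J_def by (rule sum_truncated_shift[OF _ shifted_interval_subset_extended_window[OF that]]) simp
    also have "\<dots> = real (card {A..B})" by simp
    finally show ?thesis .
  qed
  have off_diagonal: "norm (\<Sum>n\<in>J. g i n * cnj (g j n))
      \<le> norm (\<Sum>n\<in>{A..B}. aQ (n + int (i * r)) * cnj (aQ (n + int (j * r)))) + (real (i * r) + real (j * r))"
    if "i \<in> {1..M}" for i j
    using norm_sum_truncated_shift_product_le[OF finite_atLeastAtMost_int shifted_interval_subset_extended_window[OF that],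
        where f = aQ and b = "int (j * r)"] nQ
    by (simp add: g_def J_def)
  have "(\<Sum>i\<in>{1..M}. \<Sum>j\<in>{1..M} - {i}. real (i * r) + real (j * r))
      = real r * ((real M - 1) * (2 * (\<Sum>i = Suc 0..M. real i)))"
    using sum_off_diagonal_add[of "{1..M}" "\<lambda>i. real (i * r)"] by (simp add: sum_distrib_left algebra_simps)
  also have "\<dots> = real r * (real M - 1) * real M * (real M + 1)"
    by (simp only: double_gauss_sum_from_Suc_0 mult.assoc)
  finally have boundary: "(\<Sum>i\<in>{1..M}. \<Sum>j\<in>{1..M} - {i}. real (i * r) + real (j * r))
      = real r * (real M - 1) * real M * (real M + 1)" .
  have "(\<Sum>i\<in>{1..M}. \<Sum>n\<in>J. (norm (g i n))^2) \<le> real M * real (card {A..B})"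
    using sum_mono[of "{1..M}", OF diagonal] by simp
  moreover have "(\<Sum>i\<in>{1..M}. \<Sum>j\<in>{1..M} - {i}. norm (\<Sum>n\<in>J. g i n * cnj (g j n)))
      \<le> correlation_sum aQ r M {A..B} + real r * (real M - 1) * real M * (real M + 1)"
    unfolding correlation_sum_def boundary[symmetric] sum.distrib[symmetric]
    by (intro sum_mono off_diagonal) auto
  ultimately show ?thesis by simp
qed

lemma extended_window_estimate:
  fixes ar aQ :: "int \<Rightarrow> complex" and r M :: nat and A B :: int
  assumes "M \<ge> 1" and per: "\<And>n. ar (n + int r) = ar n"
    and nr: "\<And>n. norm (ar n) \<le> 1" and nQ: "\<And>n. norm (aQ n) \<le> 1"
  defines "K \<equiv> real (card {A..B})"
  shows "real M^2 * (norm (\<Sum>n\<in>{A..B}. ar n * aQ n))^2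
    \<le> (K + (real M - 1) * real r) *
      (real M * K + correlation_sum aQ r M {A..B} + real r * (real M - 1) * real M * (real M + 1))"
proof -
  define J where "J = {A - int (M * r)..B - int r}"
  define g where "g = (\<lambda>i. truncated_shift aQ {A..B} (int (i * r)))"
  have "real M^2 * (norm (\<Sum>n\<in>{A..B}. ar n * aQ n))^2 = (norm (\<Sum>n\<in>J. ar n * (\<Sum>i\<in>{1..M}. g i n)))^2"
    unfolding J_def g_def extended_window_identity[where ar = ar and aQ = aQ and r = r and M = M, OF per, symmetric]
    by (simp add: norm_mult power_mult_distrib)
  also have "\<dots> \<le> real (card J) * ((\<Sum>i\<in>{1..M}. \<Sum>n\<in>J. (norm (g i n))^2)
      + (\<Sum>i\<in>{1..M}. \<Sum>j\<in>{1..M} - {i}. norm (\<Sum>n\<in>J. g i n * cnj (g j n))))"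
    by (rule norm_sum_mult_sum_power2_le) (simp_all add: J_def nr)
  also have "\<dots> \<le> (K + (real M - 1) * real r) *
      (real M * K + correlation_sum aQ r M {A..B} + real r * (real M - 1) * real M * (real M + 1))"
    unfolding K_def J_def g_def
    by (intro mult_mono card_extended_window_le extended_window_correlations_le add_nonneg_nonneg sum_nonneg)
      (use assms(1) nQ in auto)
  finally show ?thesis .
qed

lemma power2_add_le_weighted:
  fixes t u e :: real
  assumes "e > 0"
  shows "(t + u)^2 \<le> (1 + e) * t^2 + (1 + 1 / e) * u^2"
proof -
  have "(1 + e) * t^2 + (1 + 1 / e) * u^2 - (t + u)^2 = (e * t - u)^2 / e"
    using assms by (simp add: power2_eq_square field_simps)
  then show ?thesis
    using assms by (metis diff_ge_0_iff_ge divide_nonneg_pos zero_le_power2)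
qed

lemma shifted_window_numerics:
  fixes s C K N M r :: real
  assumes M7: "M \<ge> 7" and N0: "N > 0" and K0: "0 \<le> K" and KN: "K \<le> N + 1" and r1: "r \<ge> 1"
    and rM: "r^2 * M^3 \<le> N^2" and C0: "C \<ge> 0" and s0: "0 \<le> s"
    and Ms: "M * s \<le> sqrt (K * (M * K + C)) + r * M * (M + 1)"
  shows "M^2 * s^2 \<le> 5 * M * N^2 + 2 * N * C"
proof -
  define t where "t = sqrt (K * (M * K + C))"
  define u where "u = r * M * (M + 1)"
  have t2: "t^2 = K * (M * K + C)"
    using K0 M7 C0 by (simp add: t_def)
  have "7^3 \<le> M^3" using M7 by (intro power_mono) auto
  also have "M^3 \<le> r^2 * M^3" using r1 M7 by (simp add: one_le_power)
  finally have "18^2 \<le> N^2" using rM by simp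
  then have "18 \<le> N" by (rule power2_le_imp_le) (use N0 in simp)
  then have KN': "K \<le> 19/18 * N" using KN by simp
  have u2: "u^2 \<le> 64/49 * M * N^2"
  proof -
    have "(M + 1)^2 \<le> (8/7 * M)^2" using M7 by (intro power_mono) auto
    then have "u^2 * M = (r^2 * M^3) * (M + 1)^2" by (simp add: u_def power2_eq_square power3_eq_cube)
    also have "\<dots> \<le> N^2 * (8/7 * M)^2"
      using rM \<open>(M + 1)^2 \<le> (8/7 * M)^2\<close> by (intro mult_mono) auto
    finally have "u^2 * M \<le> (64/49 * M * N^2) * M" by (simp add: power2_eq_square algebra_simps)
    then show ?thesis using M7 by (simp add: algebra_simps)
  qed
  \<comment> \<open>the weight 89/100 is small enough for 189/100 K \<le> 2 N and large enough for the constant 5\<close>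
  have "(t + u)^2 \<le> 189/100 * t^2 + 189/89 * u^2"
    using power2_add_le_weighted[of "89/100" t u] by simp
  moreover have "189/100 * t^2 \<le> 189/100 * (19/18)^2 * M * N^2 + 2 * N * C"
  proof -
    have "K^2 \<le> (19/18 * N)^2" using KN' K0 by (intro power_mono) auto
    also have "\<dots> = (19/18)^2 * N^2" by (rule power_mult_distrib)
    finally have "M * K^2 \<le> M * ((19/18)^2 * N^2)" using M7 by (intro mult_left_mono) auto
    moreover have "189/100 * K * C \<le> 2 * N * C" using KN' C0 N0 by (intro mult_right_mono) auto
    ultimately show ?thesis unfolding t2 by (simp add: power2_eq_square algebra_simps)
  qed
  moreover have "(M * s)^2 \<le> (t + u)^2"
    using Ms s0 M7 by (intro power_mono) (auto simp: t_def u_def)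
  ultimately have "M^2 * s^2 \<le> (189/100 * (19/18)^2 + 189/89 * 64/49) * M * N^2 + 2 * N * C"
    using u2 by (simp add: power_mult_distrib algebra_simps)
  also have "\<dots> \<le> 5 * M * N^2 + 2 * N * C"
    using M7 by (intro add_right_mono mult_right_mono) (auto simp: power2_eq_square)
  finally show ?thesis .
qed

lemma le_mult_of_power2_mult_cube_le:
  fixes r N M c :: real
  assumes "r^2 * M^3 \<le> N^2" "1 \<le> c^2 * M^3" "0 \<le> c" "0 \<le> N" "0 < M"
  shows "r \<le> c * N"
proof -
  have "N^2 * 1 \<le> N^2 * (c^2 * M^3)" using assms(2) by (intro mult_left_mono) auto
  then have "r^2 * M^3 \<le> (c * N)^2 * M^3" using assms(1) by (simp add: power_mult_distrib algebra_simps)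
  then have "r^2 \<le> (c * N)^2" using assms(5) by simp
  then show ?thesis by (rule power2_le_imp_le) (use assms in simp)
qed

lemma extended_window_numerics:
  fixes s C K N M r c :: real
  assumes "0 \<le> c" "1 \<le> c^2 * M^3" "1 + M * c \<le> 2"
    and "(1 + M * c) * (M * (1 + c) + c * (M - 1) * M * (M + 1)) \<le> 5 * M"
    and M1: "M \<ge> 1" and N0: "N > 0" and K0: "0 \<le> K" and KN: "K \<le> N + 1" and r1: "r \<ge> 1"
    and rM: "r^2 * M^3 \<le> N^2" and C0: "C \<ge> 0"
    and main: "M^2 * s^2 \<le> (K + (M - 1) * r) * (M * K + C + r * (M - 1) * M * (M + 1))"
  shows "M^2 * s^2 \<le> 5 * M * N^2 + 2 * N * C"
proof -
  have rc: "r \<le> c * N"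
    by (rule le_mult_of_power2_mult_cube_le[OF rM assms(2,1)]) (use N0 M1 in auto)
  have X: "K + (M - 1) * r \<le> (1 + M * c) * N"
  proof -
    have "(M - 1) * r \<le> (M - 1) * (c * N)" using M1 rc by (intro mult_left_mono) auto
    then show ?thesis using KN r1 rc by (simp add: algebra_simps)
  qed
  have Y: "M * K + r * (M - 1) * M * (M + 1) \<le> (M * (1 + c) + c * (M - 1) * M * (M + 1)) * N"
  proof -
    have "M * K \<le> M * ((1 + c) * N)" using KN r1 rc M1 by (intro mult_left_mono) (auto simp: algebra_simps)
    moreover have "r * ((M - 1) * M * (M + 1)) \<le> (c * N) * ((M - 1) * M * (M + 1))"
      using rc M1 by (intro mult_right_mono) auto
    ultimately show ?thesis by (simp add: algebra_simps)
  qed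
  have "M^2 * s^2 \<le> (K + (M - 1) * r) * (M * K + r * (M - 1) * M * (M + 1)) + (K + (M - 1) * r) * C"
    using main by (simp add: algebra_simps)
  also have "\<dots> \<le> ((1 + M * c) * N) * ((M * (1 + c) + c * (M - 1) * M * (M + 1)) * N) + (2 * N) * C"
  proof (intro add_mono mult_mono X Y)
    show "K + (M - 1) * r \<le> 2 * N"
      using order_trans[OF X mult_right_mono[OF assms(3)]] N0 by simp
  qed (use K0 M1 r1 C0 assms(1) N0 in auto)
  also have "\<dots> = ((1 + M * c) * (M * (1 + c) + c * (M - 1) * M * (M + 1))) * N^2 + 2 * N * C"
    by (simp add: power2_eq_square algebra_simps)
  also have "\<dots> \<le> 5 * M * N^2 + 2 * N * C"
    using assms(4) by (intro add_right_mono mult_right_mono) auto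
  finally show ?thesis .
qed

lemma interval_of_length_int_points:
  assumes "interval_of_length I N" "0 \<le> N"
  obtains A B where "{n. real_of_int n \<in> I} = {A..B}" "real (card {A..B}) \<le> N + 1"
proof -
  obtain a b where ab: "b - a = N" and I: "I = {a..b} \<or> I = {a<..b} \<or> I = {a..<b} \<or> I = {a<..<b}"
    using assms(1) unfolding interval_of_length_def by blast
  have above: "\<lfloor>a\<rfloor> + 1 \<le> n \<longleftrightarrow> a < real_of_int n" for n
    using floor_less_iff[of a n] by linarith
  obtain A B where AB: "{n. real_of_int n \<in> I} = {A..B}" and "a \<le> real_of_int A" "real_of_int B \<le> b"
  proof -
    consider "I = {a..b}" | "I = {a<..b}" | "I = {a..<b}" | "I = {a<..<b}" using I by blast
    then show thesis
    proof cases
      case 1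
      then show thesis by (intro that[of "\<lceil>a\<rceil>" "\<lfloor>b\<rfloor>"]) (auto simp: ceiling_le_iff le_floor_iff)
    next
      case 2
      then show thesis by (intro that[of "\<lfloor>a\<rfloor> + 1" "\<lfloor>b\<rfloor>"]) (auto simp: above le_floor_iff)
    next
      case 3
      then show thesis by (intro that[of "\<lceil>a\<rceil>" "\<lceil>b\<rceil> - 1"]) (auto simp: ceiling_le_iff less_ceiling_iff)
    next
      case 4
      then show thesis by (intro that[of "\<lfloor>a\<rfloor> + 1" "\<lceil>b\<rceil> - 1"]) (auto simp: above less_ceiling_iff)
    qed
  qed
  have "real (card {A..B}) \<le> N + 1"
    using \<open>a \<le> real_of_int A\<close> \<open>real_of_int B \<le> b\<close> ab assms(2) by (cases "A \<le> B") auto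
  with AB show thesis by (rule that)
qed

lemma floor_powr_two_thirds_cube_le:
  fixes x :: real
  assumes "0 < x"
  shows "real (nat \<lfloor>x powr (2/3)\<rfloor>) ^ 3 \<le> x^2"
proof -
  have "real (nat \<lfloor>x powr (2/3)\<rfloor>) \<le> x powr (2/3)" by simp
  then have "real (nat \<lfloor>x powr (2/3)\<rfloor>) ^ 3 \<le> (x powr (2/3)) ^ 3" by (intro power_mono) auto
  also have "\<dots> = (x powr (2/3)) powr 3"
    using assms by (simp add: powr_realpow)
  also have "\<dots> = x^2"
    using assms by (simp add: powr_powr powr_realpow)
  finally show ?thesis .
qed

lemma power2_norm_sum_le_correlation_sum:
  fixes ar aQ :: "int \<Rightarrow> complex" and r M :: nat and A B :: int and N :: real
  assumes "M \<ge> 5" and per: "\<And>n. ar (n + int r) = ar n"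
    and nr: "\<And>n. norm (ar n) \<le> 1" and nQ: "\<And>n. norm (aQ n) \<le> 1"
    and "r \<ge> 1" "N > 0" "real (card {A..B}) \<le> N + 1" "real r^2 * real M^3 \<le> N^2"
  shows "real M^2 * (norm (\<Sum>n\<in>{A..B}. ar n * aQ n))^2
    \<le> 5 * real M * N^2 + 2 * N * correlation_sum aQ r M {A..B}"
proof -
  note shifted = shifted_window_numerics[OF _ _ _ _ _ _ correlation_sum_nonneg _
      shifted_window_estimate[where ar = ar and aQ = aQ and r = r, OF per nr nQ]]
  note extended = extended_window_numerics[OF _ _ _ _ _ _ _ _ _ _ correlation_sum_nonneg
      extended_window_estimate[where ar = ar and aQ = aQ and r = r, OF _ per nr nQ]]
  consider "M \<ge> 7" | "M = 5" | "M = 6" using assms(1) by linarith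
  then show ?thesis
  proof cases
    case 1
    then show ?thesis by (intro shifted) (use assms in auto)
  next
    case 2
    then show ?thesis
      by (intro extended[where c = "9/100"]) (use assms in \<open>auto simp: power2_eq_square power3_eq_cube\<close>)
  next
    case 3
    then show ?thesis
      by (intro extended[where c = "69/1000"]) (use assms in \<open>auto simp: power2_eq_square power3_eq_cube\<close>)
  qed
qed

theorem lemma6p3:
  fixes r Q q :: nat and aq ar aQ :: "int \<Rightarrow> complex" and I :: "real set" and N :: real
    and M :: nat
  assumes "r \<ge> 1" "Q \<ge> 1" "q = r * Q" "coprime r Q"
    and "\<And>n. aq (n + int q) = aq n"
    and "\<And>n. ar (n + int r) = ar n"
    and "\<And>n. aQ (n + int Q) = aQ n"
    and "\<And>n. norm (aq n) \<le> 1" "\<And>n. norm (ar n) \<le> 1" "\<And>n. norm (aQ n) \<le> 1"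
    and "\<And>n. aq n = ar n * aQ n"
    and "N > 0" "interval_of_length I N"
    and "M = nat \<lfloor>(N / real r) powr (2/3)\<rfloor>"
    and "M \<ge> 5"
  shows "(norm (avg I N aq))^2 \<le> 5 / real M + 2 / (real M)^2 *
     (\<Sum>i\<in>{1..M}. \<Sum>j\<in>{1..M} - {i}.
        norm (avg I N (\<lambda>n. aQ (n + int (i * r)) * cnj (aQ (n + int (j * r))))))"
proof -
  \<comment> \<open>of the hypotheses on q and Q only a_q = a_r a_Q is used, and of the periods only that of a_r\<close>
  obtain A B where Z: "{n. real_of_int n \<in> I} = {A..B}" and K: "real (card {A..B}) \<le> N + 1"
    using interval_of_length_int_points[OF assms(13)] assms(12) by auto
  have "real M^3 \<le> (N / real r)^2"
    unfolding assms(14) by (rule floor_powr_two_thirds_cube_le) (use assms(1,12) in simp)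
  then have M3: "real r^2 * real M^3 \<le> N^2"
    using assms(1) by (simp add: power_divide field_simps)
  have "aq = (\<lambda>n. ar n * aQ n)" using assms(11) by auto
  then have main: "real M^2 * (norm (\<Sum>n\<in>{A..B}. aq n))^2
      \<le> 5 * real M * N^2 + 2 * N * correlation_sum aQ r M {A..B}"
    using power2_norm_sum_le_correlation_sum[where ar = ar and aQ = aQ and r = r,
        OF _ assms(6,9,10,1,12) K M3] assms(15)
    by simp
  have avg: "norm (avg I N f) = norm (\<Sum>n\<in>{A..B}. f n) / N" for f
    using assms(12) by (simp add: avg_def Z norm_mult norm_divide)
  have M0: "real M > 0" using assms(15) by simp
  have "(norm (\<Sum>n\<in>{A..B}. aq n) / N)^2 = real M^2 * (norm (\<Sum>n\<in>{A..B}. aq n))^2 / (real M^2 * N^2)"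
    using M0 by (simp add: power_divide)
  also have "\<dots> \<le> (5 * real M * N^2 + 2 * N * correlation_sum aQ r M {A..B}) / (real M^2 * N^2)"
    by (rule divide_right_mono[OF main]) simp
  also have "\<dots> = 5 / real M + 2 / (real M)^2 * (correlation_sum aQ r M {A..B} / N)"
    using M0 assms(12) by (simp add: field_simps power2_eq_square)
  finally show ?thesis
    by (simp add: avg correlation_sum_def sum_divide_distrib)
qed

end
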